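(* If $\phi\in L^\infty$ is an inner function (in particular $|\phi|=1$ a.e. on $\mathbb{T}$), then $V_\phi^*$ is an isometry on $H^2$.
   Context: $L^2=L^2(\mathbb{T})$ with orthonormal basis $e_n(z)=z^n$, $n\in\mathbb{Z}$; $H^2$ is the closed span of $\{e_n\}_{n\ge0}$, $P:L^2\to H^2$ the orthogonal projection, $M_\phi$ multiplication by $\phi$. $W:L^2\to L^2$: $We_n=e_{n/2}$ for $n$ even, $0$ for $n$ odd. $K:H^2\to L^2$: $Ke_{2n}=e_n$, $Ke_{2n+1}=e_{-n-1}$ ($n\ge0$). The slant H-Toeplitz operator is $V_\phi=WPM_\phi K:H^2\to H^2$. *)

theory Defs
  imports "HOL-Analysis.Analysis"
begin

text \<open>The circle T is parametrised by t in [0, 2 pi] via z = exp(i t); the normalised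
  Lebesgue measure dt/(2 pi) is used.  Elements of L^2 are represented by functions
  (equality a.e. is implicit: all notions below only depend on integrals).\<close>

abbreviation circ :: "real measure" where
  "circ \<equiv> lebesgue_on {0..2*pi}"

definition L2 :: "(real \<Rightarrow> complex) \<Rightarrow> bool" where
  "L2 f \<longleftrightarrow> f \<in> borel_measurable circ \<and> integrable circ (\<lambda>t. (cmod (f t))\<^sup>2)"

definition en :: "int \<Rightarrow> real \<Rightarrow> complex" where
  "en n t = exp (\<i> * of_int n * of_real t)"

definition ip :: "(real \<Rightarrow> complex) \<Rightarrow> (real \<Rightarrow> complex) \<Rightarrow> complex" where
  "ip f g = complex_of_real (1 / (2*pi)) * integral\<^sup>L circ (\<lambda>t. f t * cnj (g t))"

definition fc :: "(real \<Rightarrow> complex) \<Rightarrow> int \<Rightarrow> complex" where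
  "fc f n = ip f (en n)"

definition H2 :: "(real \<Rightarrow> complex) \<Rightarrow> bool" where
  "H2 f \<longleftrightarrow> L2 f \<and> (\<forall>n<0. fc f n = 0)"

text \<open>Inner function: phi in H^infinity (negative Fourier coefficients vanish) with
  unimodular boundary values a.e. on T (hence phi is in L^infinity).\<close>
definition inner_fun :: "(real \<Rightarrow> complex) \<Rightarrow> bool" where
  "inner_fun \<phi> \<longleftrightarrow> \<phi> \<in> borel_measurable circ \<and> (AE t in circ. cmod (\<phi> t) = 1)
     \<and> (\<forall>n<0. fc \<phi> n = 0)"

text \<open>k = K f, with K e_{2n} = e_n, K e_{2n+1} = e_{-n-1}; as a bounded operator this is
  the map on Fourier coefficients below.\<close>
definition is_K :: "(real \<Rightarrow> complex) \<Rightarrow> (real \<Rightarrow> complex) \<Rightarrow> bool" where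
  "is_K f k \<longleftrightarrow> L2 k \<and>
     (\<forall>m. fc k m = (if m \<ge> 0 then fc f (2*m) else fc f (-2*m - 1)))"

text \<open>v = W (P u): P kills negative coefficients, W e_n = e_{n/2} (n even), 0 (n odd).\<close>
definition is_WP :: "(real \<Rightarrow> complex) \<Rightarrow> (real \<Rightarrow> complex) \<Rightarrow> bool" where
  "is_WP u v \<longleftrightarrow> L2 v \<and> (\<forall>n. fc v n = (if n \<ge> 0 then fc u (2*n) else 0))"

text \<open>v = V_phi f = W P M_phi K f.\<close>
definition is_V :: "(real \<Rightarrow> complex) \<Rightarrow> (real \<Rightarrow> complex) \<Rightarrow> (real \<Rightarrow> complex) \<Rightarrow> bool" where
  "is_V \<phi> f v \<longleftrightarrow> (\<exists>k. is_K f k \<and> is_WP (\<lambda>t. \<phi> t * k t) v)"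

definition is_Vadj :: "(real \<Rightarrow> complex) \<Rightarrow> (real \<Rightarrow> complex) \<Rightarrow> (real \<Rightarrow> complex) \<Rightarrow> bool" where
  "is_Vadj \<phi> g h \<longleftrightarrow> H2 h \<and> (\<forall>f v. H2 f \<longrightarrow> is_V \<phi> f v \<longrightarrow> ip v g = ip f h)"

end

theory Submission
  imports Defs
begin

text \<open>On Fourier coefficients, $V_\varphi^*$ acts on $H^2$ as $K^* M_{\bar\varphi} W^*$: $W^* g = g(z^2)$
  spreads the coefficients of $g$ over the even indices, and $K^*$ moves the coefficient of index
  $m$ to index \<open>K_index m\<close>, where \<open>K_index\<close> is a bijection of $\mathbb{Z}$ onto $\mathbb{N}$. Both are
  reindexings of coefficients, so they preserve the $L^2$ norm by Parseval's identity, and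
  multiplication by $\bar\varphi$ preserves it because $|\varphi| = 1$ a.e.. Any other adjoint has the same coefficients, as testing against $e_j$, $j \ge 0$,
  shows, hence the same norm. Parseval's identity rests on Riesz--Fischer and on the completeness
  of the $e_n$, which follows from Stone--Weierstrass on the circle and Lebesgue's
  differentiation theorem.\<close>

interpretation circ: finite_measure circ
  by (rule finite_measureI) (simp add: emeasure_restrict_space)

lemma continuous_on_en: "continuous_on A (en n)"
  unfolding en_def by (intro continuous_intros)

lemma en_measurable [measurable]: "en n \<in> borel_measurable circ"
  by (rule continuous_imp_measurable_on_sets_lebesgue[OF continuous_on_en]) auto

lemma norm_en [simp]: "cmod (en n t) = 1"
  unfolding en_def by simp

lemma cnj_en: "cnj (en n t) = en (- n) t"
  unfolding en_def by (simp add: exp_cnj)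

lemma en_mult: "en m t * en n t = en (m + n) t"
  unfolding en_def by (simp add: exp_add[symmetric] algebra_simps)

lemma en_0 [simp]: "en 0 t = 1"
  unfolding en_def by simp

lemma integrable_en [simp]: "integrable circ (en n)"
  by (rule continuous_imp_integrable_real[OF continuous_on_en])

lemma integral_en: "integral\<^sup>L circ (en k) = (if k = 0 then 2 * pi else 0)"
proof (cases "k = 0")
  case True
  have "en 0 = (\<lambda>t. 1)"
    by (rule ext) simp
  with True show ?thesis
    by (simp add: measure_restrict_space scaleR_conv_of_real)
next
  case False
  define G where "G z = exp (\<i> * of_int k * z) / (\<i> * of_int k)" for z :: complex
  have deriv: "((G \<circ> complex_of_real) has_vector_derivative en k t) (at t within {0..2*pi})" for t
  proof -
    have "(G has_field_derivative en k t) (at (of_real t) within of_real ` {0..2*pi})"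
      unfolding G_def en_def using False by (auto intro!: derivative_eq_intros)
    moreover have "(complex_of_real has_vector_derivative 1) (at t within {0..2*pi})"
      by (auto intro!: derivative_eq_intros)
    ultimately show ?thesis
      using field_vector_diff_chain_within[of complex_of_real 1 t "{0..2*pi}" G] by simp
  qed
  have "exp (\<i> * of_int k * of_real (2 * pi)) = exp (complex_of_real (2 * of_int k * pi) * \<i>)"
    by (simp add: algebra_simps)
  also have "\<dots> = 1"
    by (rule exp_integer_2pi) simp
  finally have periodic: "G (of_real (2 * pi)) = G (of_real 0)"
    unfolding G_def by simp
  have "(en k has_integral 0) {0..2*pi}"
    using fundamental_theorem_of_calculus[of 0 "2*pi" "G \<circ> complex_of_real" "en k"] deriv periodic
    by auto
  then show ?thesis
    using False by (simp add: lebesgue_integral_eq_integral integral_unique)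
qed

lemma ip_en_en: "ip (en m) (en n) = (if m = n then 1 else 0)"
  unfolding ip_def by (simp add: cnj_en en_mult integral_en)

lemma fc_en: "fc (en m) n = (if m = n then 1 else 0)"
  unfolding fc_def by (rule ip_en_en)


lemma borel_measurable_cnj [measurable]:
  "f \<in> borel_measurable M \<Longrightarrow> (\<lambda>x. cnj (f x)) \<in> borel_measurable M"
  by (rule borel_measurable_continuous_on[OF continuous_on_cnj[OF continuous_on_id]])

lemma L2_measurable: "L2 f \<Longrightarrow> f \<in> borel_measurable circ"
  unfolding L2_def by simp

lemma L2_integrable_sq: "L2 f \<Longrightarrow> integrable circ (\<lambda>t. (cmod (f t))\<^sup>2)"
  unfolding L2_def by simp

lemma L2I: "f \<in> borel_measurable circ \<Longrightarrow> integrable circ (\<lambda>t. (cmod (f t))\<^sup>2) \<Longrightarrow> L2 f"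
  unfolding L2_def by simp

lemma L2_integrable:
  assumes "L2 f"
  shows "integrable circ f"
proof (rule Bochner_Integration.integrable_bound)
  show "integrable circ (\<lambda>t. 1 + (cmod (f t))\<^sup>2)"
    using L2_integrable_sq[OF assms] by simp
  have "x \<le> 1 + x\<^sup>2" for x :: real
  proof -
    have "0 \<le> (x - 1/2)\<^sup>2"
      by simp
    then show ?thesis
      unfolding power2_diff by (simp add: power2_eq_square)
  qed
  then show "AE t in circ. norm (f t) \<le> norm (1 + (cmod (f t))\<^sup>2)"
    by (auto intro!: AE_I2)
qed (use assms L2_measurable in auto)

lemma L2_mult_bounded:
  assumes "L2 f" "b \<in> borel_measurable circ" "AE t in circ. cmod (b t) \<le> B"
  shows "L2 (\<lambda>t. b t * f t)"
proof (rule L2I)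
  show bf: "(\<lambda>t. b t * f t) \<in> borel_measurable circ"
    using assms(2) L2_measurable[OF assms(1)] by measurable
  show "integrable circ (\<lambda>t. (cmod (b t * f t))\<^sup>2)"
  proof (rule Bochner_Integration.integrable_bound)
    show "integrable circ (\<lambda>t. B\<^sup>2 * (cmod (f t))\<^sup>2)"
      using L2_integrable_sq[OF assms(1)] by simp
    show "AE t in circ. norm ((cmod (b t * f t))\<^sup>2) \<le> norm (B\<^sup>2 * (cmod (f t))\<^sup>2)"
      using assms(3)
    proof eventually_elim
      case (elim t)
      then have "(cmod (b t))\<^sup>2 * (cmod (f t))\<^sup>2 \<le> B\<^sup>2 * (cmod (f t))\<^sup>2"
        by (intro mult_right_mono power_mono) auto
      then show ?case
        by (simp add: norm_mult power_mult_distrib)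
    qed
  qed (use bf in measurable)
qed

lemma L2_cnj_mult_bounded:
  assumes "\<phi> \<in> borel_measurable circ" "AE t in circ. cmod (\<phi> t) \<le> B" "L2 G"
  shows "L2 (\<lambda>t. cnj (\<phi> t) * G t)"
proof (rule L2_mult_bounded[OF assms(3)])
  show "(\<lambda>t. cnj (\<phi> t)) \<in> borel_measurable circ"
    using assms(1) by measurable
  show "AE t in circ. cmod (cnj (\<phi> t)) \<le> B"
    using assms(2) by simp
qed

lemma L2_cmult: "L2 f \<Longrightarrow> L2 (\<lambda>t. c * f t)"
  by (rule L2_mult_bounded[of _ _ "cmod c"]) auto

lemma L2_en [simp]: "L2 (en n)"
  using L2_mult_bounded[of "\<lambda>t. 1" "en n" 1] by (simp add: L2_def)

lemma L2_add:
  assumes "L2 f" "L2 g"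
  shows "L2 (\<lambda>t. f t + g t)"
proof (rule L2I)
  show fg: "(\<lambda>t. f t + g t) \<in> borel_measurable circ"
    using L2_measurable[OF assms(1)] L2_measurable[OF assms(2)] by measurable
  have bound: "(cmod (a + b))\<^sup>2 \<le> 2 * (cmod a)\<^sup>2 + 2 * (cmod b)\<^sup>2" for a b :: complex
  proof -
    have "(cmod (a + b))\<^sup>2 \<le> (cmod a + cmod b)\<^sup>2"
      by (simp add: norm_triangle_ineq power_mono)
    also have "\<dots> \<le> 2 * (cmod a)\<^sup>2 + 2 * (cmod b)\<^sup>2"
      using sum_power2_ge_zero[of "cmod a - cmod b" 0] by (simp add: power2_diff power2_sum)
    finally show ?thesis .
  qed
  show "integrable circ (\<lambda>t. (cmod (f t + g t))\<^sup>2)"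
  proof (rule Bochner_Integration.integrable_bound)
    show "integrable circ (\<lambda>t. 2 * (cmod (f t))\<^sup>2 + 2 * (cmod (g t))\<^sup>2)"
      using L2_integrable_sq[OF assms(1)] L2_integrable_sq[OF assms(2)] by simp
    show "AE t in circ. norm ((cmod (f t + g t))\<^sup>2) \<le> norm (2 * (cmod (f t))\<^sup>2 + 2 * (cmod (g t))\<^sup>2)"
      using bound by (auto intro!: AE_I2)
  qed (use fg in measurable)
qed

lemma L2_diff: "L2 f \<Longrightarrow> L2 g \<Longrightarrow> L2 (\<lambda>t. f t - g t)"
  using L2_add[of f "\<lambda>t. - g t"] L2_cmult[of g "- 1"] by simp

lemma L2_zero [simp]: "L2 (\<lambda>t. 0)"
  by (rule L2I) auto

lemma L2_sum: "finite F \<Longrightarrow> (\<And>i. i \<in> F \<Longrightarrow> L2 (f i)) \<Longrightarrow> L2 (\<lambda>t. \<Sum>i\<in>F. f i t)"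
  by (induction F rule: finite_induct) (auto intro: L2_add)

lemma norm_mult_cnj_le: "cmod (a * cnj b) \<le> ((cmod a)\<^sup>2 + (cmod b)\<^sup>2) / 2"
  using sum_power2_ge_zero[of "cmod a - cmod b" 0] by (simp add: norm_mult power2_diff)

lemma integrable_ip:
  assumes "L2 f" "L2 g"
  shows "integrable circ (\<lambda>t. f t * cnj (g t))"
proof (rule Bochner_Integration.integrable_bound)
  show "integrable circ (\<lambda>t. ((cmod (f t))\<^sup>2 + (cmod (g t))\<^sup>2) / 2)"
    using L2_integrable_sq[OF assms(1)] L2_integrable_sq[OF assms(2)] by simp
  show "(\<lambda>t. f t * cnj (g t)) \<in> borel_measurable circ"
    using L2_measurable[OF assms(1)] L2_measurable[OF assms(2)] by measurable
  show "AE t in circ. norm (f t * cnj (g t)) \<le> norm (((cmod (f t))\<^sup>2 + (cmod (g t))\<^sup>2) / 2)"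
    using norm_mult_cnj_le by (auto intro!: AE_I2)
qed

lemma integrable_mult_bounded:
  fixes u p :: "'a \<Rightarrow> complex"
  assumes "integrable M u" "p \<in> borel_measurable M" "AE x in M. cmod (p x) \<le> B"
  shows "integrable M (\<lambda>x. u x * p x)"
proof (rule Bochner_Integration.integrable_bound)
  show "integrable M (\<lambda>x. B * cmod (u x))"
    using assms(1) by simp
  show "(\<lambda>x. u x * p x) \<in> borel_measurable M"
    using borel_measurable_integrable[OF assms(1)] assms(2) by measurable
  show "AE x in M. norm (u x * p x) \<le> norm (B * cmod (u x))"
    using assms(3)
  proof eventually_elim
    case (elim x)
    then have "norm (u x * p x) \<le> B * cmod (u x)"
      by (simp add: norm_mult mult_right_mono mult.commute)
    then show ?case
      by (metis abs_ge_self order_trans real_norm_def)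
  qed
qed


definition sqnorm :: "(real \<Rightarrow> complex) \<Rightarrow> real" where
  "sqnorm f = 1 / (2 * pi) * integral\<^sup>L circ (\<lambda>t. (cmod (f t))\<^sup>2)"

lemma sqnorm_nonneg: "0 \<le> sqnorm f"
  unfolding sqnorm_def by (auto intro!: integral_nonneg_AE)

lemma ip_self: "ip f f = of_real (sqnorm f)"
  unfolding ip_def sqnorm_def by (simp add: complex_norm_square[symmetric] del: of_real_power)

lemma sqnorm_en [simp]: "sqnorm (en m) = 1"
  using ip_self[of "en m"] ip_en_en[of m m] by simp

lemma ip_self_mult_unimodular:
  assumes "\<psi> \<in> borel_measurable circ" "AE t in circ. cmod (\<psi> t) = 1" "L2 G"
  shows "ip (\<lambda>t. \<psi> t * G t) (\<lambda>t. \<psi> t * G t) = ip G G"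
proof -
  have "AE t in circ. cmod (\<psi> t * G t) = cmod (G t)"
    using assms(2) by eventually_elim (simp add: norm_mult)
  then have "integral\<^sup>L circ (\<lambda>t. (cmod (\<psi> t * G t))\<^sup>2) = integral\<^sup>L circ (\<lambda>t. (cmod (G t))\<^sup>2)"
    using assms(1) L2_measurable[OF assms(3)]
    by (intro integral_cong_AE) (auto elim: eventually_mono)
  then show ?thesis
    by (simp add: ip_self sqnorm_def)
qed

lemma ip_cnj: "ip g f = cnj (ip f g)"
proof -
  have "(\<lambda>t. g t * cnj (f t)) = (\<lambda>t. cnj (f t * cnj (g t)))"
    by (auto simp: mult.commute)
  then show ?thesis
    unfolding ip_def by (simp only: Bochner_Integration.integral_cnj) simp
qed

lemma ip_add_left:
  assumes "L2 f" "L2 g" "L2 h"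
  shows "ip (\<lambda>t. f t + g t) h = ip f h + ip g h"
  unfolding ip_def using integrable_ip[OF assms(1,3)] integrable_ip[OF assms(2,3)]
  by (simp add: distrib_right distrib_left)

lemma ip_cmult_left: "ip (\<lambda>t. c * f t) g = c * ip f g"
  unfolding ip_def by (simp add: mult.assoc)

lemma ip_diff_left:
  assumes "L2 f" "L2 g" "L2 h"
  shows "ip (\<lambda>t. f t - g t) h = ip f h - ip g h"
  using ip_add_left[OF assms(1) L2_cmult[OF assms(2), of "- 1"] assms(3)] ip_cmult_left[of "- 1" g h]
  by simp

lemma ip_diff_right:
  assumes "L2 f" "L2 g" "L2 h"
  shows "ip h (\<lambda>t. f t - g t) = ip h f - ip h g"
  by (subst (1 2 3) ip_cnj) (simp add: ip_diff_left[OF assms])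

lemma ip_sum_left:
  "finite F \<Longrightarrow> (\<And>i. i \<in> F \<Longrightarrow> L2 (f i)) \<Longrightarrow> L2 h \<Longrightarrow>
    ip (\<lambda>t. \<Sum>i\<in>F. f i t) h = (\<Sum>i\<in>F. ip (f i) h)"
proof (induction F rule: finite_induct)
  case empty
  then show ?case by (simp add: ip_def)
next
  case (insert x F)
  then show ?case by (simp add: ip_add_left L2_sum)
qed

lemma fc_diff: "L2 f \<Longrightarrow> L2 g \<Longrightarrow> fc (\<lambda>t. f t - g t) n = fc f n - fc g n"
  unfolding fc_def by (simp add: ip_diff_left)

lemma ip_en_left: "ip (en n) h = cnj (fc h n)"
  unfolding fc_def by (simp add: ip_cnj[of h])

lemma sq_le_of_quadratic_bound:
  fixes x A B :: real
  assumes "0 \<le> x" "0 \<le> A" "0 \<le> B" and quad: "\<And>t. t > 0 \<Longrightarrow> 2 * t * x \<le> t\<^sup>2 * A + B"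
  shows "x\<^sup>2 \<le> A * B"
proof (cases "x = 0")
  case True
  then show ?thesis using assms by simp
next
  case False
  with assms(1) have x: "x > 0" by simp
  show ?thesis
  proof (cases "A = 0")
    case True
    have "0 < B / x + 1"
      using x assms(3) by (simp add: add_nonneg_pos)
    then have "2 * (B / x + 1) * x \<le> B"
      using quad[of "B / x + 1"] True by simp
    moreover have "2 * (B / x + 1) * x = 2 * B + 2 * x"
      using x by (simp add: field_simps)
    ultimately show ?thesis
      using x assms(3) by simp
  next
    case False
    with assms(2) have A: "A > 0" by simp
    have "2 * (x / A) * x \<le> (x / A)\<^sup>2 * A + B"
      using quad[of "x / A"] A x by simp
    then show ?thesis
      using A by (simp add: power2_eq_square field_simps)
  qed
qed

lemma ip_quadratic_bound:
  assumes "L2 f" "L2 g" "t > 0"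
  shows "2 * t * cmod (ip f g) \<le> t\<^sup>2 * sqnorm f + sqnorm g"
proof -
  have "2 * t * cmod (integral\<^sup>L circ (\<lambda>x. f x * cnj (g x)))
      \<le> 2 * t * integral\<^sup>L circ (\<lambda>x. cmod (f x * cnj (g x)))"
    using assms(3) by (simp add: integral_norm_bound)
  also have "\<dots> = integral\<^sup>L circ (\<lambda>x. 2 * t * cmod (f x * cnj (g x)))"
    by simp
  also have "\<dots> \<le> integral\<^sup>L circ (\<lambda>x. t\<^sup>2 * (cmod (f x))\<^sup>2 + (cmod (g x))\<^sup>2)"
  proof (rule integral_mono)
    show "integrable circ (\<lambda>x. 2 * t * cmod (f x * cnj (g x)))"
      using integrable_ip[OF assms(1,2)] by simp
    show "integrable circ (\<lambda>x. t\<^sup>2 * (cmod (f x))\<^sup>2 + (cmod (g x))\<^sup>2)"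
      using L2_integrable_sq[OF assms(1)] L2_integrable_sq[OF assms(2)] by simp
    show "2 * t * cmod (f x * cnj (g x)) \<le> t\<^sup>2 * (cmod (f x))\<^sup>2 + (cmod (g x))\<^sup>2" for x
      using sum_power2_ge_zero[of "t * cmod (f x) - cmod (g x)" 0]
      by (simp add: norm_mult power2_diff power_mult_distrib algebra_simps)
  qed
  also have "\<dots> = t\<^sup>2 * integral\<^sup>L circ (\<lambda>x. (cmod (f x))\<^sup>2) + integral\<^sup>L circ (\<lambda>x. (cmod (g x))\<^sup>2)"
    using L2_integrable_sq[OF assms(1)] L2_integrable_sq[OF assms(2)] by simp
  finally have "2 * t * cmod (integral\<^sup>L circ (\<lambda>x. f x * cnj (g x))) / (2 * pi)
      \<le> (t\<^sup>2 * integral\<^sup>L circ (\<lambda>x. (cmod (f x))\<^sup>2) + integral\<^sup>L circ (\<lambda>x. (cmod (g x))\<^sup>2)) / (2 * pi)"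
    by (rule divide_right_mono) simp
  moreover have "cmod (ip f g) = cmod (integral\<^sup>L circ (\<lambda>x. f x * cnj (g x))) / (2 * pi)"
    unfolding ip_def by (simp add: norm_divide)
  ultimately show ?thesis
    unfolding sqnorm_def by (simp add: field_simps)
qed

lemma cauchy_schwarz:
  assumes "L2 f" "L2 g"
  shows "cmod (ip f g) \<le> sqrt (sqnorm f) * sqrt (sqnorm g)"
proof -
  have "(cmod (ip f g))\<^sup>2 \<le> sqnorm f * sqnorm g"
    using ip_quadratic_bound[OF assms] sqnorm_nonneg by (intro sq_le_of_quadratic_bound) auto
  then show ?thesis
    by (metis real_le_rsqrt real_sqrt_mult)
qed

lemma norm_fc_le: "L2 h \<Longrightarrow> cmod (fc h m) \<le> sqrt (sqnorm h)"
  unfolding fc_def using cauchy_schwarz[of h "en m"] by simp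

lemma integral_norm_le_sqnorm:
  assumes "L2 f"
  shows "integral\<^sup>L circ (\<lambda>t. cmod (f t)) \<le> 2 * pi * sqrt (sqnorm f)"
proof -
  define F where "F t = complex_of_real (cmod (f t))" for t
  have F: "L2 F"
    using assms unfolding L2_def F_def by auto
  have "0 \<le> integral\<^sup>L circ (\<lambda>t. cmod (f t))"
    by (auto intro!: integral_nonneg_AE)
  then have "cmod (ip F (en 0)) = integral\<^sup>L circ (\<lambda>t. cmod (f t)) / (2 * pi)"
    unfolding ip_def F_def by (simp add: norm_divide)
  moreover have "sqnorm F = sqnorm f"
    unfolding sqnorm_def F_def by simp
  ultimately show ?thesis
    using cauchy_schwarz[OF F L2_en[of 0]] by (simp add: pos_divide_le_eq mult.commute)
qed


section \<open>Bessel's inequality\<close>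

abbreviation sym_ivl :: "nat \<Rightarrow> int set" where
  "sym_ivl N \<equiv> {- int N .. int N}"

definition trig_sum :: "(int \<Rightarrow> complex) \<Rightarrow> nat \<Rightarrow> real \<Rightarrow> complex" where
  "trig_sum c N t = (\<Sum>n\<in>sym_ivl N. c n * en n t)"

lemma L2_trig_sum [simp]: "L2 (trig_sum c N)"
  unfolding trig_sum_def[abs_def] by (rule L2_sum) (auto intro: L2_cmult)

lemma ip_trig_sum_left: "L2 f \<Longrightarrow> ip (trig_sum c N) f = (\<Sum>n\<in>sym_ivl N. c n * cnj (fc f n))"
  unfolding trig_sum_def[abs_def]
  by (subst ip_sum_left) (auto intro: L2_cmult simp: ip_cmult_left ip_en_left)

lemma ip_trig_sum_right: "L2 f \<Longrightarrow> ip f (trig_sum c N) = (\<Sum>n\<in>sym_ivl N. cnj (c n) * fc f n)"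
  by (subst ip_cnj) (simp add: ip_trig_sum_left mult.commute)

lemma fc_trig_sum: "fc (trig_sum c N) m = (if m \<in> sym_ivl N then c m else 0)"
proof -
  have "fc (trig_sum c N) m = (\<Sum>n\<in>sym_ivl N. if n = m then c n else 0)"
    unfolding fc_def by (simp add: ip_trig_sum_left fc_en if_distrib cong: if_cong)
  then show ?thesis
    by (simp add: sum.delta')
qed

lemma sqnorm_trig_sum: "sqnorm (trig_sum c N) = (\<Sum>n\<in>sym_ivl N. (cmod (c n))\<^sup>2)"
proof -
  have "complex_of_real (sqnorm (trig_sum c N)) = (\<Sum>n\<in>sym_ivl N. c n * cnj (c n))"
    by (simp add: ip_self[symmetric] ip_trig_sum_left fc_trig_sum)
  also have "\<dots> = complex_of_real (\<Sum>n\<in>sym_ivl N. (cmod (c n))\<^sup>2)"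
    by (simp add: complex_norm_square del: of_real_power)
  finally show ?thesis
    by (simp only: of_real_eq_iff)
qed

lemma sqnorm_trig_sum_diff:
  assumes "M \<le> N"
  shows "sqnorm (\<lambda>t. trig_sum c N t - trig_sum c M t)
    = (\<Sum>n\<in>sym_ivl N. (cmod (c n))\<^sup>2) - (\<Sum>n\<in>sym_ivl M. (cmod (c n))\<^sup>2)"
proof -
  have sub: "sym_ivl M \<subseteq> sym_ivl N"
    using assms by auto
  define d where "d n = (if n \<in> sym_ivl M then 0 else c n)" for n
  have "trig_sum c N t - trig_sum c M t = trig_sum d N t" for t
  proof -
    have "trig_sum d N t = (\<Sum>n\<in>sym_ivl N. if n \<in> sym_ivl M then 0 else c n * en n t)"
      unfolding trig_sum_def d_def by (intro sum.cong) auto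
    also have "\<dots> = (\<Sum>n\<in>sym_ivl N - sym_ivl M. c n * en n t)"
      by (rule sum.mono_neutral_cong_right) auto
    also have "\<dots> = trig_sum c N t - trig_sum c M t"
      unfolding trig_sum_def by (rule sum_diff) (use sub in auto)
    finally show ?thesis ..
  qed
  then have "sqnorm (\<lambda>t. trig_sum c N t - trig_sum c M t) = (\<Sum>n\<in>sym_ivl N. (cmod (d n))\<^sup>2)"
    by (simp add: sqnorm_trig_sum)
  also have "\<dots> = (\<Sum>n\<in>sym_ivl N - sym_ivl M. (cmod (c n))\<^sup>2)"
    unfolding d_def by (rule sum.mono_neutral_cong_right) auto
  also have "\<dots> = (\<Sum>n\<in>sym_ivl N. (cmod (c n))\<^sup>2) - (\<Sum>n\<in>sym_ivl M. (cmod (c n))\<^sup>2)"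
    by (rule sum_diff) (use sub in auto)
  finally show ?thesis .
qed

lemma sqnorm_sub_trig_sum:
  assumes f: "L2 f"
  shows "sqnorm (\<lambda>t. f t - trig_sum (fc f) N t) = sqnorm f - (\<Sum>n\<in>sym_ivl N. (cmod (fc f n))\<^sup>2)"
proof -
  let ?S = "trig_sum (fc f) N"
  let ?s = "\<Sum>n\<in>sym_ivl N. (cmod (fc f n))\<^sup>2"
  have right: "ip f ?S = of_real ?s"
    using f by (simp add: ip_trig_sum_right complex_norm_square mult.commute del: of_real_power)
  then have left: "ip ?S f = of_real ?s"
    by (subst ip_cnj) simp
  have self: "ip ?S ?S = of_real ?s"
    by (simp add: ip_self sqnorm_trig_sum)
  have "complex_of_real (sqnorm (\<lambda>t. f t - ?S t)) = ip f f - ip f ?S - (ip ?S f - ip ?S ?S)"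
    using f by (simp add: ip_self[symmetric] ip_diff_left ip_diff_right L2_diff)
  also have "\<dots> = of_real (sqnorm f - ?s)"
    using right left self by (simp add: ip_self)
  finally show ?thesis
    by (simp only: of_real_eq_iff)
qed

lemma bessel_inequality: "L2 f \<Longrightarrow> (\<Sum>n\<in>sym_ivl N. (cmod (fc f n))\<^sup>2) \<le> sqnorm f"
  using sqnorm_sub_trig_sum[of f N] sqnorm_nonneg[of "\<lambda>t. f t - trig_sum (fc f) N t"] by linarith

lemma finite_subset_sym_ivl:
  assumes "finite X"
  obtains K where "X \<subseteq> sym_ivl K"
proof -
  obtain K where "\<forall>x\<in>X. nat \<bar>x\<bar> \<le> K"
    using assms finite_nat_set_iff_bounded_le[of "(\<lambda>x. nat \<bar>x\<bar>) ` X"] by auto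
  then have "X \<subseteq> sym_ivl K"
    by force
  then show ?thesis ..
qed

lemma filterlim_sym_ivl: "filterlim sym_ivl (finite_subsets_at_top UNIV) sequentially"
  unfolding filterlim_def le_filter_def eventually_filtermap
proof safe
  fix P assume "eventually P (finite_subsets_at_top (UNIV :: int set))"
  then obtain X where X: "finite X" "\<And>Y. finite Y \<Longrightarrow> X \<subseteq> Y \<Longrightarrow> P Y"
    unfolding eventually_finite_subsets_at_top by auto
  obtain K where "X \<subseteq> sym_ivl K"
    using finite_subset_sym_ivl[OF X(1)] by blast
  then have "X \<subseteq> sym_ivl N" if "K \<le> N" for N
    using that by force
  then show "\<forall>\<^sub>F N in sequentially. P (sym_ivl N)"
    using X(2) by (auto intro: eventually_sequentiallyI[of K])
qed

lemma has_sum_imp_sym_partial_sums: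
  assumes "(f has_sum s) (UNIV :: int set)"
  shows "(\<lambda>N. \<Sum>n\<in>sym_ivl N. f n) \<longlonglongrightarrow> s"
  using filterlim_compose[OF assms[unfolded has_sum_def] filterlim_sym_ivl] by (simp add: o_def)

lemma has_sum_of_sym_partial_sums:
  fixes f :: "int \<Rightarrow> 'a::banach"
  assumes "f summable_on UNIV" "(\<lambda>N. \<Sum>n\<in>sym_ivl N. f n) \<longlonglongrightarrow> s"
  shows "(f has_sum s) UNIV"
proof -
  have "(\<lambda>N. \<Sum>n\<in>sym_ivl N. f n) \<longlonglongrightarrow> infsum f UNIV"
    using assms(1) by (intro has_sum_imp_sym_partial_sums) simp
  then have "s = infsum f UNIV"
    using assms(2) LIMSEQ_unique by blast
  then show ?thesis
    using assms(1) by simp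
qed

lemma summable_on_fc_sq:
  assumes "L2 f"
  shows "(\<lambda>n. (cmod (fc f n))\<^sup>2) summable_on UNIV"
proof (rule nonneg_bdd_above_summable_on)
  show "bdd_above (sum (\<lambda>n. (cmod (fc f n))\<^sup>2) ` {F. F \<subseteq> UNIV \<and> finite F})"
  proof (rule bdd_aboveI2)
    fix F :: "int set" assume "F \<in> {F. F \<subseteq> UNIV \<and> finite F}"
    then obtain K where "F \<subseteq> sym_ivl K"
      using finite_subset_sym_ivl by blast
    then have "(\<Sum>n\<in>F. (cmod (fc f n))\<^sup>2) \<le> (\<Sum>n\<in>sym_ivl K. (cmod (fc f n))\<^sup>2)"
      by (intro sum_mono2) auto
    also have "\<dots> \<le> sqnorm f"
      by (rule bessel_inequality[OF assms])
    finally show "(\<Sum>n\<in>F. (cmod (fc f n))\<^sup>2) \<le> sqnorm f" .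
  qed
qed simp


section \<open>The Riesz--Fischer theorem\<close>

lemma nn_integral_sq_dist_le_of_tendsto:
  assumes s: "\<And>k. L2 (s k)" and g: "L2 g"
    and lim: "AE x in circ. (\<lambda>k. s k x) \<longlonglongrightarrow> w x"
    and bnd: "eventually (\<lambda>k. sqnorm (\<lambda>t. s k t - g t) \<le> B) sequentially"
  shows "(\<integral>\<^sup>+x. ennreal ((cmod (w x - g x))\<^sup>2) \<partial>circ) \<le> ennreal (2 * pi * B)"
proof -
  define F where "F k x = ennreal ((cmod (s k x - g x))\<^sup>2)" for k x
  have F_measurable: "F k \<in> borel_measurable circ" for k
    unfolding F_def using L2_measurable[OF s] L2_measurable[OF g] by measurable
  have "AE x in circ. ennreal ((cmod (w x - g x))\<^sup>2) = liminf (\<lambda>k. F k x)"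
    using lim
  proof eventually_elim
    case (elim x)
    then have "(\<lambda>k. ennreal ((cmod (s k x - g x))\<^sup>2)) \<longlonglongrightarrow> ennreal ((cmod (w x - g x))\<^sup>2)"
      by (intro tendsto_ennrealI tendsto_intros)
    from lim_imp_Liminf[OF _ this] show ?case
      unfolding F_def by simp
  qed
  then have "(\<integral>\<^sup>+x. ennreal ((cmod (w x - g x))\<^sup>2) \<partial>circ) = (\<integral>\<^sup>+x. liminf (\<lambda>k. F k x) \<partial>circ)"
    by (rule nn_integral_cong_AE)
  also have "\<dots> \<le> liminf (\<lambda>k. integral\<^sup>N circ (F k))"
    by (rule nn_integral_liminf[OF F_measurable])
  also have "\<dots> \<le> limsup (\<lambda>k. integral\<^sup>N circ (F k))"
    by (rule Liminf_le_Limsup) simp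
  also have "\<dots> \<le> ennreal (2 * pi * B)"
    using bnd
  proof (intro Limsup_bounded, eventually_elim)
    case (elim k)
    have "L2 (\<lambda>t. s k t - g t)"
      using s g by (rule L2_diff)
    then have "integral\<^sup>N circ (F k) = ennreal (integral\<^sup>L circ (\<lambda>x. (cmod (s k x - g x))\<^sup>2))"
      unfolding F_def by (intro nn_integral_eq_integral) (auto dest: L2_integrable_sq)
    also have "integral\<^sup>L circ (\<lambda>x. (cmod (s k x - g x))\<^sup>2) = 2 * pi * sqnorm (\<lambda>t. s k t - g t)"
      unfolding sqnorm_def by simp
    finally show ?case
      using elim by (simp add: ennreal_leI)
  qed
  finally show ?thesis .
qed

lemma fatou_L2:
  assumes s: "\<And>k. L2 (s k)" and g: "L2 g"
    and lim: "AE x in circ. (\<lambda>k. s k x) \<longlonglongrightarrow> w x"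
    and w_measurable: "w \<in> borel_measurable circ"
    and bnd: "eventually (\<lambda>k. sqnorm (\<lambda>t. s k t - g t) \<le> B) sequentially"
  shows "L2 w" "sqnorm (\<lambda>t. w t - g t) \<le> B"
proof -
  have B: "0 \<le> B"
  proof -
    from bnd obtain k where "sqnorm (\<lambda>t. s k t - g t) \<le> B"
      by (auto dest: eventually_happens)
    then show ?thesis
      using sqnorm_nonneg order_trans by blast
  qed
  have fin: "(\<integral>\<^sup>+x. ennreal ((cmod (w x - g x))\<^sup>2) \<partial>circ) \<le> ennreal (2 * pi * B)"
    by (rule nn_integral_sq_dist_le_of_tendsto[OF s g lim bnd])
  have wg_measurable: "(\<lambda>x. w x - g x) \<in> borel_measurable circ"
    using w_measurable L2_measurable[OF g] by measurable
  have int: "integrable circ (\<lambda>x. (cmod (w x - g x))\<^sup>2)"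
  proof (rule integrableI_bounded)
    show "(\<lambda>x. (cmod (w x - g x))\<^sup>2) \<in> borel_measurable circ"
      using wg_measurable by measurable
    show "(\<integral>\<^sup>+x. ennreal (norm ((cmod (w x - g x))\<^sup>2)) \<partial>circ) < \<infinity>"
      using fin by (simp add: order_le_less_trans)
  qed
  then have "L2 (\<lambda>x. (w x - g x) + g x)"
    using L2_add[OF L2I[OF wg_measurable] g] by blast
  then show "L2 w"
    by simp
  have "ennreal (integral\<^sup>L circ (\<lambda>x. (cmod (w x - g x))\<^sup>2)) \<le> ennreal (2 * pi * B)"
    using fin int by (subst nn_integral_eq_integral[symmetric]) auto
  then have "integral\<^sup>L circ (\<lambda>x. (cmod (w x - g x))\<^sup>2) \<le> 2 * pi * B"
    using B by (simp add: ennreal_le_iff)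
  then show "sqnorm (\<lambda>t. w t - g t) \<le> B"
    unfolding sqnorm_def by (simp add: field_simps)
qed

lemma sqnorm_trig_sum_dist:
  "sqnorm (\<lambda>t. trig_sum c i t - trig_sum c j t)
    = \<bar>(\<Sum>n\<in>sym_ivl i. (cmod (c n))\<^sup>2) - (\<Sum>n\<in>sym_ivl j. (cmod (c n))\<^sup>2)\<bar>"
proof (cases "j \<le> i")
  case True
  then show ?thesis
    using sqnorm_trig_sum_diff[OF True] sqnorm_nonneg by (metis abs_of_nonneg)
next
  case False
  have "sqnorm (\<lambda>t. trig_sum c i t - trig_sum c j t) = sqnorm (\<lambda>t. trig_sum c j t - trig_sum c i t)"
    unfolding sqnorm_def by (simp add: norm_minus_commute)
  then show ?thesis
    using sqnorm_trig_sum_diff[of i j c] False sqnorm_nonneg by (metis abs_minus_commute abs_of_nonneg nat_le_linear)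
qed

lemma trig_sum_L1_Cauchy:
  assumes sq: "(\<lambda>n. (cmod (c n))\<^sup>2) summable_on UNIV" and e: "e > 0"
  shows "\<exists>N. \<forall>i\<ge>N. \<forall>j\<ge>N. integral\<^sup>L circ (\<lambda>x. cmod (trig_sum c i x - trig_sum c j x)) < e"
proof -
  define P where "P N = (\<Sum>n\<in>sym_ivl N. (cmod (c n))\<^sup>2)" for N
  have "Cauchy P"
    using has_sum_imp_sym_partial_sums[OF has_sum_infsum[OF sq]] unfolding P_def
    by (rule LIMSEQ_imp_Cauchy)
  moreover have "(e / (2 * pi))\<^sup>2 > 0"
    using e by simp
  ultimately obtain M where M: "\<And>i j. i \<ge> M \<Longrightarrow> j \<ge> M \<Longrightarrow> dist (P i) (P j) < (e / (2 * pi))\<^sup>2"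
    using metric_CauchyD by blast
  have "integral\<^sup>L circ (\<lambda>x. cmod (trig_sum c i x - trig_sum c j x)) < e" if "i \<ge> M" "j \<ge> M" for i j
  proof -
    have "integral\<^sup>L circ (\<lambda>x. cmod (trig_sum c i x - trig_sum c j x))
        \<le> 2 * pi * sqrt (sqnorm (\<lambda>t. trig_sum c i t - trig_sum c j t))"
      by (rule integral_norm_le_sqnorm) (auto intro: L2_diff)
    also have "\<dots> < 2 * pi * (e / (2 * pi))"
      using M[OF that] e
      by (intro mult_strict_left_mono real_less_lsqrt) (auto simp: sqnorm_trig_sum_dist dist_real_def P_def)
    also have "\<dots> = e"
      by simp
    finally show ?thesis .
  qed
  then show ?thesis
    by blast
qed

lemma fc_eq_of_sqnorm_sub_trig_sum_tendsto_0:
  assumes w: "L2 w" and conv: "(\<lambda>N. sqnorm (\<lambda>t. w t - trig_sum c N t)) \<longlonglongrightarrow> 0"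
  shows "fc w m = c m"
proof -
  have "cmod (fc w m - c m) \<le> sqrt (sqnorm (\<lambda>t. w t - trig_sum c N t))" if "N \<ge> nat \<bar>m\<bar>" for N
  proof -
    have "fc w m - c m = fc (\<lambda>t. w t - trig_sum c N t) m"
      using w that by (auto simp: fc_diff fc_trig_sum)
    also have "cmod \<dots> \<le> sqrt (sqnorm (\<lambda>t. w t - trig_sum c N t))"
      using w by (intro norm_fc_le L2_diff) auto
    finally show ?thesis .
  qed
  moreover have "(\<lambda>N. sqrt (sqnorm (\<lambda>t. w t - trig_sum c N t))) \<longlonglongrightarrow> 0"
    using tendsto_real_sqrt[OF conv] by simp
  ultimately have "cmod (fc w m - c m) \<le> 0"
    by (intro LIMSEQ_le_const[of "\<lambda>N. sqrt (sqnorm (\<lambda>t. w t - trig_sum c N t))"]) auto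
  then show ?thesis
    by simp
qed

theorem riesz_fischer:
  assumes sq: "(\<lambda>n. (cmod (c n))\<^sup>2) summable_on UNIV"
  obtains w where "L2 w" "\<And>n. fc w n = c n" "(\<lambda>N. sqnorm (\<lambda>t. w t - trig_sum c N t)) \<longlonglongrightarrow> 0"
proof -
  define P where "P N = (\<Sum>n\<in>sym_ivl N. (cmod (c n))\<^sup>2)" for N
  define L where "L = infsum (\<lambda>n. (cmod (c n))\<^sup>2) UNIV"
  have PL: "P \<longlonglongrightarrow> L"
    using has_sum_imp_sym_partial_sums[OF has_sum_infsum[OF sq]] unfolding P_def L_def .
  have "incseq P"
    unfolding incseq_def P_def by (auto intro!: sum_mono2)
  then have P_le_L: "P N \<le> L" for N
    using PL by (rule incseq_le)
  obtain r where r: "strict_mono r" and "AE x in circ. Cauchy (\<lambda>i. trig_sum c (r i) x)"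
    using cauchy_L1_AE_cauchy_subseq[OF L2_integrable[OF L2_trig_sum] trig_sum_L1_Cauchy[OF sq]]
    by blast
  then have lim: "AE x in circ. (\<lambda>i. trig_sum c (r i) x) \<longlonglongrightarrow> lim (\<lambda>i. trig_sum c (r i) x)"
    by (auto simp: Cauchy_convergent_iff convergent_LIMSEQ_iff)
  define w where "w x = lim (\<lambda>i. trig_sum c (r i) x)" for x
  have w_measurable: "w \<in> borel_measurable circ"
    unfolding w_def using L2_measurable[OF L2_trig_sum] by measurable
  have tail: "L2 w \<and> sqnorm (\<lambda>t. w t - trig_sum c n t) \<le> L - P n" for n
  proof -
    have "sqnorm (\<lambda>t. trig_sum c (r k) t - trig_sum c n t) \<le> L - P n" if "n \<le> k" for k
    proof -
      have "n \<le> r k"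
        using seq_suble[OF r, of k] that by simp
      then show ?thesis
        using sqnorm_trig_sum_diff[of n "r k" c] P_le_L[of "r k"] unfolding P_def by simp
    qed
    then show ?thesis
      using fatou_L2[OF L2_trig_sum L2_trig_sum lim[folded w_def] w_measurable]
      by (meson eventually_sequentiallyI)
  qed
  then have w: "L2 w"
    by blast
  have tail_lim: "(\<lambda>N. L - P N) \<longlonglongrightarrow> 0"
    using tendsto_diff[OF tendsto_const[of L] PL] by simp
  have conv: "(\<lambda>N. sqnorm (\<lambda>t. w t - trig_sum c N t)) \<longlonglongrightarrow> 0"
    using tail sqnorm_nonneg by (intro real_tendsto_sandwich[OF _ _ tendsto_const tail_lim]) auto
  with w show ?thesis
    using that fc_eq_of_sqnorm_sub_trig_sum_tendsto_0 by blast
qed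

lemma L2_with_fc:
  assumes "(\<lambda>n. (cmod (c n))\<^sup>2) summable_on UNIV"
  obtains w where "L2 w" "fc w = c"
  using riesz_fischer[OF assms] by (metis ext)


section \<open>Completeness of the exponentials\<close>

inductive trig_poly :: "(real \<Rightarrow> complex) \<Rightarrow> bool" where
  trig_poly_en: "trig_poly (\<lambda>t. c * en n t)"
| trig_poly_add: "trig_poly p \<Longrightarrow> trig_poly q \<Longrightarrow> trig_poly (\<lambda>t. p t + q t)"

lemma trig_poly_const: "trig_poly (\<lambda>t. c)"
  using trig_poly_en[of c 0] by simp

lemma trig_poly_mult_en: "trig_poly p \<Longrightarrow> trig_poly (\<lambda>t. p t * (d * en m t))"
proof (induction rule: trig_poly.induct)
  case (trig_poly_en c n)
  have "(\<lambda>t. c * en n t * (d * en m t)) = (\<lambda>t. (c * d) * en (n + m) t)"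
    by (rule ext) (simp add: en_mult[symmetric] mult_ac)
  then show ?case
    using trig_poly.trig_poly_en by simp
next
  case (trig_poly_add p q)
  then show ?case
    using trig_poly.trig_poly_add by (simp add: distrib_right)
qed

lemma trig_poly_mult:
  assumes "trig_poly p" "trig_poly q"
  shows "trig_poly (\<lambda>t. p t * q t)"
  using assms(2)
proof (induction rule: trig_poly.induct)
  case (trig_poly_en c n)
  then show ?case
    by (rule trig_poly_mult_en[OF assms(1)])
next
  case (trig_poly_add q1 q2)
  then show ?case
    using trig_poly.trig_poly_add by (simp add: distrib_left)
qed

lemma continuous_on_trig_poly: "trig_poly p \<Longrightarrow> continuous_on A p"
  by (induction rule: trig_poly.induct) (auto intro!: continuous_intros continuous_on_en)

lemma trig_poly_measurable: "trig_poly p \<Longrightarrow> p \<in> borel_measurable circ"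
  by (rule continuous_imp_measurable_on_sets_lebesgue[OF continuous_on_trig_poly]) auto

lemma trig_poly_bounded: "trig_poly p \<Longrightarrow> \<exists>B. \<forall>t. cmod (p t) \<le> B"
proof (induction rule: trig_poly.induct)
  case (trig_poly_en c n)
  then show ?case
    by (intro exI[of _ "cmod c"]) (simp add: norm_mult)
next
  case (trig_poly_add p q)
  then obtain B1 B2 where "\<forall>t. cmod (p t) \<le> B1" "\<forall>t. cmod (q t) \<le> B2"
    by blast
  then show ?case
    by (intro exI[of _ "B1 + B2"]) (auto intro: norm_triangle_le add_mono)
qed

lemma trig_poly_cos: "trig_poly (\<lambda>t. complex_of_real (cos t))"
proof -
  have "(\<lambda>t. complex_of_real (cos t)) = (\<lambda>t. (1/2) * en 1 t + (1/2) * en (-1) t)"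
    by (rule ext) (simp add: en_def cos_of_real[symmetric] cos_exp_eq)
  then show ?thesis
    by (simp only: trig_poly.intros)
qed

lemma trig_poly_sin: "trig_poly (\<lambda>t. complex_of_real (sin t))"
proof -
  have "(\<lambda>t. complex_of_real (sin t)) = (\<lambda>t. (-\<i>/2) * en 1 t + (\<i>/2) * en (-1) t)"
    by (rule ext) (simp add: en_def sin_of_real[symmetric] sin_exp_eq field_simps)
  then show ?thesis
    by (simp only: trig_poly.intros)
qed

lemma integrable_mult_trig_poly:
  assumes "integrable circ u" "trig_poly p"
  shows "integrable circ (\<lambda>t. u t * p t)"
proof -
  obtain B where "\<forall>t. cmod (p t) \<le> B"
    using trig_poly_bounded[OF assms(2)] by blast
  then show ?thesis
    by (intro integrable_mult_bounded[OF assms(1) trig_poly_measurable[OF assms(2)]]) auto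
qed

lemma integral_mult_trig_poly_eq_0:
  assumes u: "integrable circ u" and fc0: "\<And>n. integral\<^sup>L circ (\<lambda>t. u t * en n t) = 0"
  shows "trig_poly p \<Longrightarrow> integral\<^sup>L circ (\<lambda>t. u t * p t) = 0"
proof (induction rule: trig_poly.induct)
  case (trig_poly_en c n)
  have "integral\<^sup>L circ (\<lambda>t. u t * (c * en n t)) = c * integral\<^sup>L circ (\<lambda>t. u t * en n t)"
    by (simp add: mult_ac)
  then show ?case
    using fc0 by simp
next
  case (trig_poly_add p q)
  then show ?case
    using integrable_mult_trig_poly[OF u] by (simp add: distrib_left)
qed

lemma cos_less_1: "0 < x \<Longrightarrow> x < 2 * pi \<Longrightarrow> cos x < 1"
  using cos_monotone_0_pi[of 0 x] cos_monotone_0_pi[of 0 "2 * pi - x"] by (cases "x \<le> pi") auto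

lemma cos_le_max_endpoints:
  assumes "0 < a" "b < 2 * pi" "a < x" "x < b"
  shows "cos x \<le> max (cos a) (cos b)"
proof (cases "x \<le> pi")
  case True
  then have "cos x \<le> cos a"
    using assms by (intro cos_monotone_0_pi_le) auto
  then show ?thesis
    by simp
next
  case False
  then have "cos (2 * pi - x) \<le> cos (2 * pi - b)"
    using assms by (intro cos_monotone_0_pi_le) auto
  then show ?thesis
    by simp
qed

lemma cis_Arg_uminus:
  assumes "cmod z = 1"
  shows "cis (Arg (- z) + pi) = z"
proof -
  have "z \<noteq> 0"
    using assms by auto
  then have "cis (Arg (- z)) = - z"
    using cis_Arg[of "- z"] assms by (simp add: sgn_eq)
  then show ?thesis
    by (simp add: cis_mult[symmetric])
qed

text \<open>\<open>Arg (- z) + pi\<close> is the angle of \<open>z\<close> in $(0, 2\pi]$. It jumps only at $z = 1$,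
  near which a function vanishing outside $(a, b)$, $0 < a < b < 2\pi$, is zero; so such a function
  lifts to a continuous function on the circle.\<close>
lemma continuous_on_circle_lift:
  fixes \<psi> :: "real \<Rightarrow> real"
  assumes cont: "continuous_on UNIV \<psi>" and ab: "0 < a" "a < b" "b < 2 * pi"
    and zero: "\<And>t. t \<le> a \<or> t \<ge> b \<Longrightarrow> \<psi> t = 0"
  shows "continuous_on (sphere 0 1) (\<lambda>z. \<psi> (Arg (- z) + pi))"
proof -
  define c where "c = max (cos a) (cos b)"
  have "c < 1"
    unfolding c_def using cos_less_1[of a] cos_less_1[of b] ab by simp
  define S1 where "S1 = sphere 0 1 \<inter> {z. Re z < 1}"
  define S2 where "S2 = sphere 0 1 \<inter> {z. c < Re z}"
  have U: "S1 \<union> S2 = sphere 0 1"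
    using \<open>c < 1\<close> by (auto simp: S1_def S2_def)
  have "continuous_on S1 (\<lambda>z. \<psi> (Arg (- z) + pi))"
  proof -
    have "- z \<notin> \<real>\<^sub>\<le>\<^sub>0" if "z \<in> S1" for z
      using that by (auto simp: S1_def complex_nonpos_Reals_iff cmod_eq_Re)
    then show ?thesis
      by (intro continuous_on_compose2[OF cont _ subset_UNIV] continuous_intros) auto
  qed
  moreover have "continuous_on S2 (\<lambda>z. \<psi> (Arg (- z) + pi))"
  proof (rule continuous_on_eq[OF continuous_on_const])
    fix z assume "z \<in> S2"
    then have z: "cmod z = 1" "c < Re z"
      by (auto simp: S2_def)
    define x where "x = Arg (- z) + pi"
    have "Re z = cos x"
      using cis_Arg_uminus[OF z(1)] unfolding x_def by (metis cis.sel(1))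
    then have "x \<le> a \<or> x \<ge> b"
      using cos_le_max_endpoints[of a b x] ab z(2) unfolding c_def by force
    then show "0 = \<psi> (Arg (- z) + pi)"
      using zero unfolding x_def by metis
  qed
  moreover have "openin (top_of_set (S1 \<union> S2)) S1" "openin (top_of_set (S1 \<union> S2)) S2"
    unfolding U unfolding S1_def S2_def
    by (intro openin_open_Int open_halfspace_Re_lt open_halfspace_Re_gt)+
  ultimately show ?thesis
    using continuous_on_Un_local_open U by metis
qed

lemma circle_lift_cis:
  fixes \<psi> :: "real \<Rightarrow> real"
  assumes "t \<in> {0..2*pi}" "\<psi> 0 = \<psi> (2 * pi)"
  shows "\<psi> (Arg (- cis t) + pi) = \<psi> t"
proof (cases "t = 0")
  case True
  then show ?thesis
    using Arg_cis[of pi] assms(2) by simp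
next
  case False
  then have "t - pi \<in> {-pi<..pi}"
    using assms(1) by auto
  moreover have "- cis t = cis (t - pi)"
    by (simp add: complex_eq_iff cos_diff sin_diff)
  ultimately show ?thesis
    using Arg_cis by simp
qed

lemma trig_poly_approx_on_circle:
  fixes f :: "complex \<Rightarrow> real"
  assumes f: "continuous_on (sphere 0 1) f" and e: "e > 0"
  obtains p where "trig_poly p" "\<And>t. cmod (complex_of_real (f (cis t)) - p t) < e"
proof -
  define P where "P g \<longleftrightarrow> continuous_on (sphere 0 1) g \<and> (\<exists>p. trig_poly p \<and> (\<forall>t. complex_of_real (g (cis t)) = p t))"
    for g :: "complex \<Rightarrow> real"
  have "\<exists>g. P g \<and> (\<forall>x \<in> sphere 0 1. \<bar>f x - g x\<bar> < e)"
  proof (rule Stone_Weierstrass_HOL[of "sphere 0 1" P f e])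
    show "P (\<lambda>x. c)" for c
      unfolding P_def using trig_poly_const[of "complex_of_real c"] by auto
    show "P (\<lambda>x. g x + h x)" "P (\<lambda>x. g x * h x)" if "P g \<and> P h" for g h
    proof -
      from that obtain p q where pq: "trig_poly p" "trig_poly q"
        "\<forall>t. complex_of_real (g (cis t)) = p t" "\<forall>t. complex_of_real (h (cis t)) = q t"
        "continuous_on (sphere 0 1) g" "continuous_on (sphere 0 1) h"
        unfolding P_def by blast
      show "P (\<lambda>x. g x + h x)"
        unfolding P_def using pq by (auto intro!: continuous_on_add trig_poly_add exI[of _ "\<lambda>t. p t + q t"])
      show "P (\<lambda>x. g x * h x)"
        unfolding P_def using pq by (auto intro!: continuous_on_mult trig_poly_mult exI[of _ "\<lambda>t. p t * q t"])
    qed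
    have "P Re" "P Im"
      unfolding P_def using trig_poly_cos trig_poly_sin by (auto intro!: continuous_intros)
    then show "\<exists>g. P g \<and> g x \<noteq> g y" if "x \<in> sphere 0 1 \<and> y \<in> sphere 0 1 \<and> x \<noteq> y" for x y
      using that complex_eqI by blast
  qed (use f e in \<open>auto simp: P_def\<close>)
  then obtain g p where g: "\<And>x. x \<in> sphere 0 1 \<Longrightarrow> \<bar>f x - g x\<bar> < e"
    and p: "trig_poly p" "\<And>t. complex_of_real (g (cis t)) = p t"
    unfolding P_def by blast
  show ?thesis
  proof (rule that[OF p(1)])
    fix t
    have "cmod (complex_of_real (f (cis t)) - p t) = \<bar>f (cis t) - g (cis t)\<bar>"
      unfolding p(2)[symmetric] of_real_diff[symmetric] norm_of_real ..
    then show "cmod (complex_of_real (f (cis t)) - p t) < e"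
      using g[of "cis t"] by simp
  qed
qed

lemma trig_poly_uniform_approx:
  fixes \<psi> :: "real \<Rightarrow> real"
  assumes cont: "continuous_on UNIV \<psi>" and ab: "0 < a" "a < b" "b < 2 * pi"
    and zero: "\<And>t. t \<le> a \<or> t \<ge> b \<Longrightarrow> \<psi> t = 0"
    and e: "e > 0"
  obtains p where "trig_poly p" "\<And>t. t \<in> {0..2*pi} \<Longrightarrow> cmod (complex_of_real (\<psi> t) - p t) < e"
proof -
  obtain p where p: "trig_poly p" "\<And>t. cmod (complex_of_real (\<psi> (Arg (- cis t) + pi)) - p t) < e"
    using trig_poly_approx_on_circle[OF continuous_on_circle_lift[OF cont ab zero] e] by blast
  have "\<psi> (Arg (- cis t) + pi) = \<psi> t" if "t \<in> {0..2*pi}" for t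
    using circle_lift_cis[OF that] zero ab by simp
  with p show ?thesis
    using that by metis
qed

lemma norm_integral_mult_le_of_trig_poly_approx:
  assumes u: "integrable circ u" and fc0: "\<And>n. integral\<^sup>L circ (\<lambda>t. u t * en n t) = 0"
    and q: "integrable circ (\<lambda>t. u t * q t)" and p: "trig_poly p"
    and approx: "\<And>t. t \<in> {0..2*pi} \<Longrightarrow> cmod (q t - p t) \<le> \<delta>"
  shows "cmod (integral\<^sup>L circ (\<lambda>t. u t * q t)) \<le> \<delta> * integral\<^sup>L circ (\<lambda>t. cmod (u t))"
proof -
  have up: "integrable circ (\<lambda>t. u t * p t)"
    by (rule integrable_mult_trig_poly[OF u p])
  have "integral\<^sup>L circ (\<lambda>t. u t * q t) = integral\<^sup>L circ (\<lambda>t. u t * (q t - p t))"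
    using q up integral_mult_trig_poly_eq_0[OF u fc0 p] by (simp add: right_diff_distrib)
  also have "cmod \<dots> \<le> integral\<^sup>L circ (\<lambda>t. cmod (u t * (q t - p t)))"
    by (rule integral_norm_bound)
  also have "\<dots> \<le> integral\<^sup>L circ (\<lambda>t. \<delta> * cmod (u t))"
  proof (rule integral_mono)
    show "integrable circ (\<lambda>t. cmod (u t * (q t - p t)))"
      using Bochner_Integration.integrable_diff[OF q up] by (simp add: right_diff_distrib)
    show "cmod (u t * (q t - p t)) \<le> \<delta> * cmod (u t)" if "t \<in> space circ" for t
    proof -
      have "cmod (q t - p t) * cmod (u t) \<le> \<delta> * cmod (u t)"
        using approx[of t] that by (intro mult_right_mono) auto
      then show ?thesis
        by (simp only: norm_mult mult.commute)
    qed
  qed (use u in simp)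
  finally show ?thesis
    by simp
qed

lemma integral_mult_continuous_eq_0:
  assumes u: "integrable circ u" and fc0: "\<And>n. integral\<^sup>L circ (\<lambda>t. u t * en n t) = 0"
    and cont: "continuous_on UNIV \<psi>" and ab: "0 < a" "a < b" "b < 2 * pi"
    and zero: "\<And>t. t \<le> a \<or> t \<ge> b \<Longrightarrow> \<psi> t = 0"
  shows "integral\<^sup>L circ (\<lambda>t. u t * complex_of_real (\<psi> t)) = 0"
proof -
  let ?X = "integral\<^sup>L circ (\<lambda>t. u t * complex_of_real (\<psi> t))"
  let ?C = "integral\<^sup>L circ (\<lambda>t. cmod (u t))"
  have cont': "continuous_on {0..2*pi} (\<lambda>t. complex_of_real (\<psi> t))"
    using continuous_on_subset[OF cont] by (auto intro: continuous_intros)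
  then have psi_measurable: "(\<lambda>t. complex_of_real (\<psi> t)) \<in> borel_measurable circ"
    by (rule continuous_imp_measurable_on_sets_lebesgue) auto
  obtain B where "\<And>t. t \<in> {0..2*pi} \<Longrightarrow> cmod (complex_of_real (\<psi> t)) \<le> B"
    using compact_imp_bounded[OF compact_continuous_image[OF cont' compact_Icc]]
    by (metis bounded_iff image_eqI)
  then have "AE t in circ. cmod (complex_of_real (\<psi> t)) \<le> B"
    by (intro AE_I2) simp
  then have u_psi: "integrable circ (\<lambda>t. u t * complex_of_real (\<psi> t))"
    by (rule integrable_mult_bounded[OF u psi_measurable])
  have "0 \<le> ?C"
    by (auto intro!: integral_nonneg_AE)
  then have C1: "?C + 1 > 0"
    by linarith
  have "cmod ?X \<le> 0 + e" if e: "e > 0" for e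
  proof -
    from e C1 have "e / (?C + 1) > 0"
      by simp
    then obtain p where p: "trig_poly p"
      and approx: "\<And>t. t \<in> {0..2*pi} \<Longrightarrow> cmod (complex_of_real (\<psi> t) - p t) < e / (?C + 1)"
      using trig_poly_uniform_approx[OF cont ab zero] by blast
    have "cmod ?X \<le> e / (?C + 1) * ?C"
      using approx by (intro norm_integral_mult_le_of_trig_poly_approx[OF u fc0 u_psi p]) (auto intro: less_imp_le)
    also have "\<dots> \<le> e / (?C + 1) * (?C + 1)"
      using e C1 by (intro mult_left_mono) auto
    also have "\<dots> = e"
      using C1 by simp
    finally show ?thesis
      by simp
  qed
  then have "cmod ?X \<le> 0"
    by (rule field_le_epsilon)
  then show ?thesis
    by simp
qed

definition bump :: "real \<Rightarrow> real \<Rightarrow> nat \<Rightarrow> real \<Rightarrow> real" where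
  "bump a b k t = min 1 (real (Suc k) * max 0 (min (t - a) (b - t)))"

lemma continuous_on_bump: "continuous_on A (bump a b k)"
  unfolding bump_def by (intro continuous_intros)

lemma bump_eq_0:
  assumes "t \<le> a \<or> t \<ge> b"
  shows "bump a b k t = 0"
proof -
  have "max 0 (min (t - a) (b - t)) = 0"
    using assms by auto
  then show ?thesis
    unfolding bump_def by simp
qed

lemma abs_bump_le_1: "\<bar>bump a b k t\<bar> \<le> 1"
  unfolding bump_def by (simp add: min_def)

lemma bump_tendsto_indicator: "(\<lambda>k. bump a b k t) \<longlonglongrightarrow> indicator {a<..<b} t"
proof (cases "a < t \<and> t < b")
  case True
  define m where "m = min (t - a) (b - t)"
  have m: "m > 0"
    using True by (simp add: m_def)
  obtain K :: nat where K: "1 / m < real K"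
    using reals_Archimedean2 by blast
  have "bump a b k t = 1" if "K \<le> k" for k
  proof -
    have "1 / m < real (Suc k)"
      using K that by linarith
    then have "1 \<le> real (Suc k) * m"
      using m by (simp add: field_simps)
    then show ?thesis
      unfolding bump_def m_def[symmetric] using m by (simp add: max_def)
  qed
  then have "(\<lambda>k. bump a b k t) \<longlonglongrightarrow> 1"
    by (intro tendsto_eventually eventually_sequentiallyI[of K])
  then show ?thesis
    using True by simp
next
  case False
  then have "bump a b k t = 0" for k
    by (intro bump_eq_0) auto
  then show ?thesis
    using False by simp
qed

lemma integral_mult_indicator_eq_0:
  assumes u: "integrable circ u" and fc0: "\<And>n. integral\<^sup>L circ (\<lambda>t. u t * en n t) = 0"
    and ab: "0 < a" "a < b" "b < 2 * pi"
  shows "integral\<^sup>L circ (\<lambda>t. u t * complex_of_real (indicator {a<..<b} t)) = 0"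
proof -
  have u_measurable: "u \<in> borel_measurable circ"
    using u by (rule borel_measurable_integrable)
  have "(\<lambda>t. t) \<in> borel_measurable circ"
    by (rule continuous_imp_measurable_on_sets_lebesgue) (auto intro: continuous_intros)
  moreover have "bump a b k \<in> borel_measurable circ" for k
    by (rule continuous_imp_measurable_on_sets_lebesgue[OF continuous_on_bump]) auto
  ultimately have "(\<lambda>k. integral\<^sup>L circ (\<lambda>t. u t * complex_of_real (bump a b k t))) \<longlonglongrightarrow>
        integral\<^sup>L circ (\<lambda>t. u t * complex_of_real (indicator {a<..<b} t))"
    using u_measurable
    by (intro integral_dominated_convergence[where w = "\<lambda>t. cmod (u t)"])
       (auto intro!: AE_I2 tendsto_mult tendsto_of_real bump_tendsto_indicator
          mult_left_le[OF abs_bump_le_1] simp: norm_mult u)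
  moreover have "integral\<^sup>L circ (\<lambda>t. u t * complex_of_real (bump a b k t)) = 0" for k
    by (rule integral_mult_continuous_eq_0[OF u fc0 continuous_on_bump ab bump_eq_0])
  ultimately show ?thesis
    by (simp add: LIMSEQ_const_iff)
qed

text \<open>By Lebesgue's differentiation theorem, almost every point is one where the averages of
  \<open>F\<close> over small intervals converge to \<open>F\<close>; inside $(a, b)$ these averages vanish.\<close>
lemma AE_eq_0_if_cbox_integrals_eq_0:
  fixes F :: "real \<Rightarrow> complex"
  assumes F: "integrable lebesgue F"
    and integral_0: "\<And>x h. a < x \<Longrightarrow> 0 < h \<Longrightarrow> x + h < b \<Longrightarrow> integral (cbox x (x + h)) F = 0"
  shows "AE x in lebesgue. a < x \<longrightarrow> x < b \<longrightarrow> F x = 0"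
proof -
  have "F integrable_on cbox c d" for c d
    using integrable_on_lebesgue[OF F] integrable_on_subcbox by blast
  then obtain N where N: "negligible N"
    "\<And>x e. \<lbrakk>x \<notin> N; 0 < e\<rbrakk> \<Longrightarrow> \<exists>d>0. \<forall>h. 0 < h \<and> h < d \<longrightarrow>
        norm (integral (cbox x (x + h *\<^sub>R One)) F /\<^sub>R h ^ DIM(real) - F x) < e"
    using integrable_ccontinuous_explicit[of F] by blast
  have F_zero: "F x = 0" if x: "x \<notin> N" "a < x" "x < b" for x
  proof (rule ccontr)
    assume "F x \<noteq> 0"
    then obtain d where d: "d > 0"
      "\<And>h. 0 < h \<and> h < d \<Longrightarrow> norm (integral (cbox x (x + h *\<^sub>R One)) F /\<^sub>R h ^ DIM(real) - F x) < cmod (F x)"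
      using N(2)[OF x(1), of "cmod (F x)"] by auto
    define m where "m = min d (b - x)"
    have m: "0 < m" "m \<le> d" "m \<le> b - x"
      using d x by (auto simp: m_def)
    then have "0 < m / 2" "m / 2 < d" "x + m / 2 < b"
      by auto
    then show False
      using d(2)[of "m / 2"] integral_0[of x "m / 2"] x by simp
  qed
  have "AE x in lebesgue. x \<notin> N"
    using N(1) by (intro AE_not_in) (simp add: negligible_iff_null_sets[symmetric])
  then show ?thesis
    by eventually_elim (auto intro: F_zero)
qed

lemma AE_eq_0_if_interval_integrals_eq_0:
  assumes u: "integrable circ u"
    and intervals: "\<And>a b. 0 < a \<Longrightarrow> a < b \<Longrightarrow> b < 2 * pi \<Longrightarrow>
      integral\<^sup>L circ (\<lambda>t. u t * complex_of_real (indicator {a<..<b} t)) = 0"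
  shows "AE t in circ. u t = 0"
proof -
  define F where "F t = (if t \<in> {0..2*pi} then u t else 0)" for t
  have F: "integrable lebesgue F"
    unfolding F_def using u by (subst Lebesgue_Measure.integrable_restrict_UNIV) auto
  have "integral (cbox x (x + h)) F = 0" if "0 < x" "0 < h" "x + h < 2 * pi" for x h
  proof -
    have "set_lebesgue_integral lebesgue {x<..<x+h} F
        = integral\<^sup>L lebesgue (\<lambda>t. if t \<in> {0..2*pi} then u t * complex_of_real (indicator {x<..<x+h} t) else 0)"
      unfolding set_lebesgue_integral_def F_def
      by (intro Bochner_Integration.integral_cong) (auto simp: indicator_def)
    also have "\<dots> = integral\<^sup>L circ (\<lambda>t. u t * complex_of_real (indicator {x<..<x+h} t))"
      by (rule Lebesgue_Measure.integral_restrict_UNIV) simp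
    also have "\<dots> = 0"
      using that by (intro intervals) auto
    moreover have "set_integrable lebesgue {x<..<x+h} F"
      unfolding set_integrable_def by (rule integrable_mult_indicator[OF _ F]) simp
    ultimately have "(F has_integral 0) {x<..<x+h}"
      using has_integral_set_lebesgue by fastforce
    then have "(F has_integral 0) (cbox x (x + h))"
      by (subst has_integral_open_interval[symmetric]) simp
    then show ?thesis
      by (rule integral_unique)
  qed
  then have "AE x in lebesgue. 0 < x \<longrightarrow> x < 2 * pi \<longrightarrow> F x = 0"
    by (rule AE_eq_0_if_cbox_integrals_eq_0[OF F])
  moreover have "AE x in lebesgue. x \<notin> {0, 2 * pi}"
    by (intro AE_not_in) (simp add: negligible_iff_null_sets[symmetric] negligible_insert)
  ultimately have "AE x in lebesgue. x \<in> {0..2*pi} \<longrightarrow> u x = 0"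
    by eventually_elim (auto simp: F_def less_le)
  then show ?thesis
    by (subst AE_restrict_space_iff) auto
qed

lemma AE_eq_0_if_fc_eq_0:
  assumes u: "L2 u" and fc0: "\<And>n. fc u n = 0"
  shows "AE t in circ. u t = 0"
proof (rule AE_eq_0_if_interval_integrals_eq_0[OF L2_integrable[OF u]])
  have orth: "integral\<^sup>L circ (\<lambda>t. u t * en n t) = 0" for n
    using fc0[of "- n"] unfolding fc_def ip_def by (simp add: cnj_en)
  fix a b :: real assume "0 < a" "a < b" "b < 2 * pi"
  then show "integral\<^sup>L circ (\<lambda>t. u t * complex_of_real (indicator {a<..<b} t)) = 0"
    by (rule integral_mult_indicator_eq_0[OF L2_integrable[OF u] orth])
qed


section \<open>Parseval's identity\<close>

lemma sqnorm_sub_trig_sum_tendsto_0: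
  assumes f: "L2 f"
  shows "(\<lambda>N. sqnorm (\<lambda>t. f t - trig_sum (fc f) N t)) \<longlonglongrightarrow> 0"
proof -
  obtain w where w: "L2 w" "\<And>n. fc w n = fc f n" "(\<lambda>N. sqnorm (\<lambda>t. w t - trig_sum (fc f) N t)) \<longlonglongrightarrow> 0"
    using riesz_fischer[OF summable_on_fc_sq[OF f]] by blast
  have "AE t in circ. f t - w t = 0"
    using f w by (intro AE_eq_0_if_fc_eq_0) (auto intro: L2_diff simp: fc_diff)
  then have ae: "AE t in circ. f t = w t"
    by simp
  have "sqnorm (\<lambda>t. f t - trig_sum (fc f) N t) = sqnorm (\<lambda>t. w t - trig_sum (fc f) N t)" for N
  proof -
    have "integral\<^sup>L circ (\<lambda>t. (cmod (f t - trig_sum (fc f) N t))\<^sup>2)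
        = integral\<^sup>L circ (\<lambda>t. (cmod (w t - trig_sum (fc f) N t))\<^sup>2)"
    proof (rule integral_cong_AE)
      have "f \<in> borel_measurable circ" "w \<in> borel_measurable circ" "trig_sum (fc f) N \<in> borel_measurable circ"
        using L2_measurable f w(1) L2_trig_sum by blast+
      then show "(\<lambda>t. (cmod (f t - trig_sum (fc f) N t))\<^sup>2) \<in> borel_measurable circ"
        "(\<lambda>t. (cmod (w t - trig_sum (fc f) N t))\<^sup>2) \<in> borel_measurable circ"
        by measurable
      show "AE t in circ. (cmod (f t - trig_sum (fc f) N t))\<^sup>2 = (cmod (w t - trig_sum (fc f) N t))\<^sup>2"
        using ae by eventually_elim simp
    qed
    then show ?thesis
      unfolding sqnorm_def by simp
  qed
  then show ?thesis
    using w(3) by simp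
qed

lemma summable_on_fc_mult_cnj:
  assumes "L2 f" "L2 g"
  shows "(\<lambda>n. fc f n * cnj (fc g n)) summable_on UNIV"
proof (rule abs_summable_summable)
  have "(\<lambda>n. ((cmod (fc f n))\<^sup>2 + (cmod (fc g n))\<^sup>2) * (1 / 2)) summable_on UNIV"
    using summable_on_add[OF summable_on_fc_sq[OF assms(1)] summable_on_fc_sq[OF assms(2)]]
    by (rule summable_on_cmult_left)
  then show "(\<lambda>n. norm (fc f n * cnj (fc g n))) summable_on UNIV"
    by (rule summable_on_comparison_test) (use norm_mult_cnj_le in auto)
qed

theorem parseval:
  assumes f: "L2 f" and g: "L2 g"
  shows "((\<lambda>n. fc f n * cnj (fc g n)) has_sum ip f g) UNIV"
proof (rule has_sum_of_sym_partial_sums[OF summable_on_fc_mult_cnj[OF f g]])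
  define r where "r N t = f t - trig_sum (fc f) N t" for N t
  have r: "L2 (r N)" for N
    unfolding r_def[abs_def] using f by (intro L2_diff) auto
  have "ip f g - ip (trig_sum (fc f) N) g = ip (r N) g" for N
    unfolding r_def[abs_def] using f g by (simp add: ip_diff_left)
  then have bound: "norm (ip f g - ip (trig_sum (fc f) N) g) \<le> sqrt (sqnorm (r N)) * sqrt (sqnorm g)" for N
    using cauchy_schwarz[OF r g] by simp
  have "(\<lambda>N. sqrt (sqnorm (r N))) \<longlonglongrightarrow> 0"
    using tendsto_real_sqrt[OF sqnorm_sub_trig_sum_tendsto_0[OF f]] unfolding r_def[abs_def] by simp
  then have "(\<lambda>N. sqrt (sqnorm (r N)) * sqrt (sqnorm g)) \<longlonglongrightarrow> 0"
    by (rule tendsto_mult_left_zero)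
  moreover have "\<forall>\<^sub>F N in sequentially.
      norm (ip f g - ip (trig_sum (fc f) N) g) \<le> sqrt (sqnorm (r N)) * sqrt (sqnorm g)"
    using bound by (simp add: always_eventually)
  ultimately have "(\<lambda>N. ip f g - ip (trig_sum (fc f) N) g) \<longlonglongrightarrow> 0"
    by (rule Lim_null_comparison[rotated])
  from tendsto_diff[OF tendsto_const[of "ip f g"] this]
  have "(\<lambda>N. ip (trig_sum (fc f) N) g) \<longlonglongrightarrow> ip f g"
    by simp
  then show "(\<lambda>N. \<Sum>n\<in>sym_ivl N. fc f n * cnj (fc g n)) \<longlonglongrightarrow> ip f g"
    using g by (simp add: ip_trig_sum_left)
qed

lemma has_sum_reindex_cong_neutral:
  assumes "inj h" "\<And>m. m \<notin> range h \<Longrightarrow> F m = 0"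
  shows "(F has_sum s) UNIV \<longleftrightarrow> ((\<lambda>n. F (h n)) has_sum s) UNIV"
proof -
  have "(F has_sum s) UNIV \<longleftrightarrow> (F has_sum s) (range h)"
    by (rule has_sum_cong_neutral) (use assms(2) in auto)
  also have "\<dots> \<longleftrightarrow> ((F \<circ> h) has_sum s) UNIV"
    by (rule has_sum_reindex) (use assms(1) in auto)
  finally show ?thesis
    by (simp add: o_def)
qed

lemma summable_on_reindex_cong_neutral:
  assumes "inj h" "\<And>m. m \<notin> range h \<Longrightarrow> F m = 0"
  shows "F summable_on UNIV \<longleftrightarrow> (\<lambda>n. F (h n)) summable_on UNIV"
  using has_sum_reindex_cong_neutral[of h F, OF assms] unfolding summable_on_def by blast

lemma summable_on_comp_inj:
  fixes F :: "'a \<Rightarrow> 'b::banach"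
  assumes "F summable_on UNIV" "inj h"
  shows "(\<lambda>n. F (h n)) summable_on UNIV"
proof -
  have "F summable_on range h"
    by (rule summable_on_subset_banach[OF assms(1)]) simp
  then show ?thesis
    using summable_on_reindex[of h UNIV F] assms(2) by (simp add: o_def)
qed

lemma parseval_reindex:
  assumes "L2 f" "L2 g" "inj r" "\<And>j. j \<notin> range r \<Longrightarrow> fc f j * cnj (fc g j) = 0"
  shows "((\<lambda>n. fc f (r n) * cnj (fc g (r n))) has_sum ip f g) UNIV"
  using parseval[OF assms(1,2)] has_sum_reindex_cong_neutral[of r "\<lambda>j. fc f j * cnj (fc g j)", OF assms(3,4)]
  by blast

lemma ip_self_reindex:
  assumes "L2 f" "L2 g" "inj r" "\<And>n. fc f (r n) = fc g n" "\<And>j. j \<notin> range r \<Longrightarrow> fc f j = 0"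
  shows "ip f f = ip g g"
proof -
  have "((\<lambda>n. fc g n * cnj (fc g n)) has_sum ip f f) UNIV"
    using parseval_reindex[OF assms(1,1,3)] assms(4,5) by simp
  then show ?thesis
    using parseval[OF assms(2,2)] has_sum_unique by blast
qed

lemma ip_self_cong_fc: "L2 f \<Longrightarrow> L2 g \<Longrightarrow> fc f = fc g \<Longrightarrow> ip f f = ip g g"
  using ip_self_reindex[of f g id] by simp

section \<open>The slant H-Toeplitz operator and its adjoint\<close>

text \<open>\<open>K_index\<close> is the bijection of $\mathbb{Z}$ onto $\mathbb{N}$ with $K e_{K\_index\ m} = e_m$, so
  \<open>fc (K f) m = fc f (K_index m)\<close>, and \<open>Kadj_coeffs c\<close> are the coefficients of $K^*$ applied to
  a function with coefficients \<open>c\<close>.\<close>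
definition K_index :: "int \<Rightarrow> int" where
  "K_index m = (if 0 \<le> m then 2 * m else - 2 * m - 1)"

definition K_index_inv :: "int \<Rightarrow> int" where
  "K_index_inv j = (if even j then j div 2 else - (j div 2) - 1)"

lemma K_index_nonneg: "0 \<le> K_index m"
  unfolding K_index_def by auto

lemma K_index_inv_K_index [simp]: "K_index_inv (K_index m) = m"
proof (cases "0 \<le> m")
  case True
  then show ?thesis
    unfolding K_index_def K_index_inv_def by simp
next
  case False
  have "odd (- 2 * m - 1)" "(- 2 * m - 1) div 2 = - m - 1"
    by presburger+
  with False show ?thesis
    unfolding K_index_def K_index_inv_def by simp
qed

lemma K_index_K_index_inv: "0 \<le> j \<Longrightarrow> K_index (K_index_inv j) = j"
  unfolding K_index_def K_index_inv_def by (cases "even j") (auto, presburger+)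

lemma inj_K_index: "inj K_index"
  by (metis injI K_index_inv_K_index)

lemma range_K_index: "range K_index = {0..}"
proof (intro equalityI subsetI)
  show "j \<in> range K_index" if "j \<in> {0..}" for j
    using K_index_K_index_inv[of j] that by (metis atLeast_iff rangeI)
qed (auto simp: K_index_nonneg)

lemma is_K_iff: "is_K f k \<longleftrightarrow> L2 k \<and> (\<forall>m. fc k m = fc f (K_index m))"
  unfolding is_K_def K_index_def by auto

text \<open>Fourier coefficients of $g(z^2)$ in terms of those of $g$.\<close>
definition dilate_coeffs :: "(int \<Rightarrow> complex) \<Rightarrow> int \<Rightarrow> complex" where
  "dilate_coeffs c m = (if even m then c (m div 2) else 0)"

definition Kadj_coeffs :: "(int \<Rightarrow> complex) \<Rightarrow> int \<Rightarrow> complex" where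
  "Kadj_coeffs c j = (if 0 \<le> j then c (K_index_inv j) else 0)"

lemma dilate_coeffs_double [simp]: "dilate_coeffs c (2 * n) = c n"
  unfolding dilate_coeffs_def by simp

lemma dilate_coeffs_outside: "m \<notin> range (\<lambda>n. 2 * n) \<Longrightarrow> dilate_coeffs c m = 0"
  unfolding dilate_coeffs_def by (auto elim: evenE)

lemma Kadj_coeffs_K_index [simp]: "Kadj_coeffs c (K_index m) = c m"
  unfolding Kadj_coeffs_def by (simp add: K_index_nonneg)

lemma Kadj_coeffs_outside: "j \<notin> range K_index \<Longrightarrow> Kadj_coeffs c j = 0"
  unfolding Kadj_coeffs_def range_K_index by simp

lemma inj_double: "inj (\<lambda>n::int. 2 * n)"
  by (auto intro: injI)

lemma summable_on_dilate_coeffs_sq: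
  assumes "(\<lambda>n. (cmod (c n))\<^sup>2) summable_on UNIV"
  shows "(\<lambda>m. (cmod (dilate_coeffs c m))\<^sup>2) summable_on UNIV"
  using assms by (subst summable_on_reindex_cong_neutral[OF inj_double]) (auto simp: dilate_coeffs_outside)

lemma summable_on_Kadj_coeffs_sq:
  assumes "(\<lambda>n. (cmod (c n))\<^sup>2) summable_on UNIV"
  shows "(\<lambda>j. (cmod (Kadj_coeffs c j))\<^sup>2) summable_on UNIV"
  using assms by (subst summable_on_reindex_cong_neutral[OF inj_K_index]) (auto simp: Kadj_coeffs_outside)

lemma is_V_exists:
  assumes \<phi>: "\<phi> \<in> borel_measurable circ" "AE t in circ. cmod (\<phi> t) \<le> B" and f: "L2 f"
  shows "\<exists>v. is_V \<phi> f v"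
proof -
  obtain k where k: "L2 k" "fc k = (\<lambda>m. fc f (K_index m))"
    using L2_with_fc[OF summable_on_comp_inj[OF summable_on_fc_sq[OF f] inj_K_index]] by blast
  then have "is_K f k"
    by (simp add: is_K_iff)
  have \<phi>k: "L2 (\<lambda>t. \<phi> t * k t)"
    using L2_mult_bounded[OF k(1) \<phi>] .
  define d where "d n = (if n \<ge> 0 then fc (\<lambda>t. \<phi> t * k t) (2 * n) else 0)" for n
  have "(\<lambda>n. (cmod (d n))\<^sup>2) summable_on UNIV"
    by (rule summable_on_comparison_test[OF summable_on_comp_inj[OF summable_on_fc_sq[OF \<phi>k] inj_double]])
       (auto simp: d_def)
  then obtain v where "L2 v" "fc v = d"
    by (rule L2_with_fc)
  then have "is_WP (\<lambda>t. \<phi> t * k t) v"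
    by (simp add: is_WP_def d_def)
  with \<open>is_K f k\<close> show ?thesis
    unfolding is_V_def by blast
qed

lemma is_Vadj_fc_unique:
  assumes \<phi>: "\<phi> \<in> borel_measurable circ" "AE t in circ. cmod (\<phi> t) \<le> B"
    and h: "is_Vadj \<phi> g h" and h': "is_Vadj \<phi> g h'"
  shows "fc h = fc h'"
proof
  fix j
  show "fc h j = fc h' j"
  proof (cases "0 \<le> j")
    case True
    then have "H2 (en j)"
      by (auto simp: H2_def fc_en)
    moreover obtain v where "is_V \<phi> (en j) v"
      using is_V_exists[OF \<phi> L2_en] by blast
    ultimately have "ip (en j) h = ip (en j) h'"
      using h h' unfolding is_Vadj_def by metis
    then show ?thesis
      by (simp add: ip_en_left)
  next
    case False
    then show ?thesis
      using h h' by (simp add: is_Vadj_def H2_def)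
  qed
qed

context
  fixes \<phi> g G h :: "real \<Rightarrow> complex"
  assumes G: "L2 G" "fc G = dilate_coeffs (fc g)"
    and h: "L2 h" "fc h = Kadj_coeffs (fc (\<lambda>t. cnj (\<phi> t) * G t))"
begin

lemma is_Vadj_Kadj:
  assumes \<phi>: "\<phi> \<in> borel_measurable circ" "AE t in circ. cmod (\<phi> t) \<le> B" and g: "H2 g"
  shows "is_Vadj \<phi> g h"
  unfolding is_Vadj_def
proof (intro conjI allI impI)
  show "H2 h"
    using h by (simp add: H2_def Kadj_coeffs_def)
  fix f v assume f: "H2 f" and V: "is_V \<phi> f v"
  obtain k where k: "L2 k" "\<And>m. fc k m = fc f (K_index m)" and v: "L2 v"
    and fc_v: "\<And>n. fc v n = (if n \<ge> 0 then fc (\<lambda>t. \<phi> t * k t) (2 * n) else 0)"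
    using V unfolding is_V_def is_K_iff is_WP_def by blast
  let ?u = "\<lambda>t. cnj (\<phi> t) * G t"
  have g': "L2 g" "\<And>n. n < 0 \<Longrightarrow> fc g n = 0"
    using g by (auto simp: H2_def)
  have \<phi>k: "L2 (\<lambda>t. \<phi> t * k t)"
    using L2_mult_bounded[OF k(1) \<phi>] .
  have u: "L2 ?u"
    by (rule L2_cnj_mult_bounded[OF \<phi> G(1)])
  have "(\<lambda>n. fc (\<lambda>t. \<phi> t * k t) (2 * n) * cnj (fc G (2 * n))) = (\<lambda>n. fc v n * cnj (fc g n))"
    by (rule ext) (simp add: fc_v G(2) g'(2))
  then have "((\<lambda>n. fc v n * cnj (fc g n)) has_sum ip (\<lambda>t. \<phi> t * k t) G) UNIV"
    using parseval_reindex[OF \<phi>k G(1) inj_double] G(2) by (simp add: dilate_coeffs_outside)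
  then have "ip v g = ip (\<lambda>t. \<phi> t * k t) G"
    using parseval[OF v g'(1)] has_sum_unique by blast
  also have "\<dots> = ip k ?u"
    unfolding ip_def by (simp add: mult_ac)
  also have "\<dots> = ip f h"
  proof -
    have "((\<lambda>m. fc k m * cnj (fc ?u m)) has_sum ip f h) UNIV"
      using parseval_reindex[OF _ h(1) inj_K_index] f h(2) k(2)
      by (auto simp: H2_def Kadj_coeffs_outside)
    then show ?thesis
      using parseval[OF k(1) u] has_sum_unique by blast
  qed
  finally show "ip v g = ip f h" .
qed

lemma ip_self_Kadj:
  assumes \<phi>: "\<phi> \<in> borel_measurable circ" "AE t in circ. cmod (\<phi> t) = 1" and g: "L2 g"
  shows "ip h h = ip g g"
proof -
  have "AE t in circ. cmod (\<phi> t) \<le> 1"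
    using \<phi>(2) by (auto elim: eventually_mono)
  then have u: "L2 (\<lambda>t. cnj (\<phi> t) * G t)"
    by (rule L2_cnj_mult_bounded[OF \<phi>(1) _ G(1)])
  have "ip h h = ip (\<lambda>t. cnj (\<phi> t) * G t) (\<lambda>t. cnj (\<phi> t) * G t)"
    using h u by (intro ip_self_reindex[OF _ _ inj_K_index]) (auto simp: Kadj_coeffs_outside)
  also have "\<dots> = ip G G"
    using \<phi> G(1) by (intro ip_self_mult_unimodular) auto
  also have "\<dots> = ip g g"
    using G g by (intro ip_self_reindex[OF _ _ inj_double]) (auto simp: dilate_coeffs_outside)
  finally show ?thesis .
qed

end

lemma is_Vadj_isometric_exists:
  assumes \<phi>: "\<phi> \<in> borel_measurable circ" "AE t in circ. cmod (\<phi> t) = 1" and g: "H2 g"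
  obtains h where "is_Vadj \<phi> g h" "ip h h = ip g g"
proof -
  have \<phi>_bounded: "AE t in circ. cmod (\<phi> t) \<le> 1"
    using \<phi>(2) by (auto elim: eventually_mono)
  have "L2 g"
    using g by (simp add: H2_def)
  obtain G where G: "L2 G" "fc G = dilate_coeffs (fc g)"
    using L2_with_fc[OF summable_on_dilate_coeffs_sq[OF summable_on_fc_sq[OF \<open>L2 g\<close>]]] by blast
  obtain h where h: "L2 h" "fc h = Kadj_coeffs (fc (\<lambda>t. cnj (\<phi> t) * G t))"
    using L2_with_fc[OF summable_on_Kadj_coeffs_sq[OF summable_on_fc_sq[OF
          L2_cnj_mult_bounded[OF \<phi>(1) \<phi>_bounded G(1)]]]] by blast
  show ?thesis
    using that is_Vadj_Kadj[OF G h \<phi>(1) \<phi>_bounded g] ip_self_Kadj[OF G h \<phi> \<open>L2 g\<close>] .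
qed

theorem mainTheorem3:
  assumes "inner_fun \<phi>"
  shows "\<forall>g. H2 g \<longrightarrow> (\<exists>h. is_Vadj \<phi> g h) \<and> (\<forall>h. is_Vadj \<phi> g h \<longrightarrow> ip h h = ip g g)"
proof (intro allI impI)
  fix g assume g: "H2 g"
  have \<phi>: "\<phi> \<in> borel_measurable circ" "AE t in circ. cmod (\<phi> t) = 1"
    using assms unfolding inner_fun_def by auto
  then have \<phi>_bounded: "AE t in circ. cmod (\<phi> t) \<le> 1"
    by (auto elim: eventually_mono)
  obtain h where adj: "is_Vadj \<phi> g h" and isometric: "ip h h = ip g g"
    using is_Vadj_isometric_exists[OF \<phi> g] .
  have "ip h' h' = ip g g" if adj': "is_Vadj \<phi> g h'" for h'
  proof -
    have "ip h' h' = ip h h"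
      using adj adj' is_Vadj_fc_unique[OF \<phi>(1) \<phi>_bounded adj adj']
      by (intro ip_self_cong_fc) (auto simp: is_Vadj_def H2_def)
    with isometric show ?thesis
      by simp
  qed
  with adj show "(\<exists>h. is_Vadj \<phi> g h) \<and> (\<forall>h. is_Vadj \<phi> g h \<longrightarrow> ip h h = ip g g)"
    by blast
qed

end
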